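(* In the two-type setting, suppose $\phi_1\sigma>1$, and let $r=\inf\{\lambda_1(p):p\in(0,\bar p_1]\times[0,\bar p_2]\}$. Let $p^0\in(0,1)^2$ with $p^0_1+p^0_2\le1$ and $p^n=h^n(p^0)$. Then there is $\bar c\in(0,p^0_1)$ such that for every $c\in(0,\bar c]$ there is $\bar k\in\mathbb N$ with the property: for all $n\in\mathbb N$, if $p^n_1\ge c$ then there is $k\le\bar k$ with $p^{n+k}_1>\frac{3}{2r}c$.
   Context: Two-type limiting map: $\beta_1,\beta_2>0$, $\alpha(1),\alpha(2)\in[0,1)$, $\phi_i=(1-\alpha(i))\beta_i$. For $p\in[0,1]^2$, $S(p)=\beta_1p_1+\beta_2p_2$ and $f^{(i)}(p)=(1-e^{-S(p)})\beta_ip_i/S(p)$ ($=0$ if $S(p)=0$). For $\alpha\in(0,1)$ let $g_\alpha(x)=\frac{(1-\sqrt{1-4(1-\alpha)x(1-x)})^3}{8(1-\alpha)^2x^2}$ for $x\in(0,1]$ and $g_\alpha(0)=0$; let $g_0(x)=x$ for $x\le1/2$ and $g_0(x)=(1-x)^3/x^2$ for $x>1/2$. $h(p)=(h_1(p),h_2(p))$ with $h_i(p)=g_{\alpha(i)}(f^{(i)}(p))$; $\lambda_i(p)=h_i(p)/p_i$ for $p_i>0$. $\bar p_i=\sup_{x\in[0,1]}g_{\alpha(i)}(x)$. $\psi(x)=(1-e^{-x})/x$, $\psi(0)=1$. For $x\in[0,1]$ let $\Psi_n(x)=\big(\prod_{k=0}^{n-1}\psi(\beta_2h^k_2(0,x))\big)^{1/n}$,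 $\underline\Psi(x)=\liminf_{n\to\infty}\Psi_n(x)$, and $\sigma=\inf_{x\in[0,\bar p_2]}\underline\Psi(x)$. *)

theory Defs
  imports "HOL-Analysis.Analysis"
begin

definition S2 :: "real \<Rightarrow> real \<Rightarrow> real \<times> real \<Rightarrow> real" where
  "S2 b1 b2 p = b1 * fst p + b2 * snd p"

definition fmap :: "real \<Rightarrow> real \<Rightarrow> real \<Rightarrow> real \<Rightarrow> real \<times> real \<Rightarrow> real" where
  "fmap b1 b2 bi qi p =
     (if S2 b1 b2 p = 0 then 0 else (1 - exp (- S2 b1 b2 p)) * bi * qi / S2 b1 b2 p)"

definition gfun :: "real \<Rightarrow> real \<Rightarrow> real" where
  "gfun a x =
     (if a = 0 then (if x \<le> 1/2 then x else (1 - x)^3 / x^2)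
      else if x = 0 then 0
      else (1 - sqrt (1 - 4 * (1 - a) * x * (1 - x)))^3 / (8 * (1 - a)^2 * x^2))"

definition hmap :: "real \<Rightarrow> real \<Rightarrow> real \<Rightarrow> real \<Rightarrow> real \<times> real \<Rightarrow> real \<times> real" where
  "hmap b1 b2 a1 a2 p =
     (gfun a1 (fmap b1 b2 b1 (fst p) p), gfun a2 (fmap b1 b2 b2 (snd p) p))"

text \<open>lambda_1(p) = h_1(p)/p_1 (used only for p_1 > 0).\<close>
definition lam1 :: "real \<Rightarrow> real \<Rightarrow> real \<Rightarrow> real \<Rightarrow> real \<times> real \<Rightarrow> real" where
  "lam1 b1 b2 a1 a2 p = fst (hmap b1 b2 a1 a2 p) / fst p"

definition pbar :: "real \<Rightarrow> real" where
  "pbar a = (SUP x\<in>{0..1}. gfun a x)"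

definition psi :: "real \<Rightarrow> real" where
  "psi x = (if x = 0 then 1 else (1 - exp (- x)) / x)"

definition Psi_n :: "real \<Rightarrow> real \<Rightarrow> real \<Rightarrow> real \<Rightarrow> nat \<Rightarrow> real \<Rightarrow> real" where
  "Psi_n b1 b2 a1 a2 n x =
     (\<Prod>k<n. psi (b2 * snd ((hmap b1 b2 a1 a2 ^^ k) (0, x)))) powr (1 / real n)"

definition Psi_liminf :: "real \<Rightarrow> real \<Rightarrow> real \<Rightarrow> real \<Rightarrow> real \<Rightarrow> ereal" where
  "Psi_liminf b1 b2 a1 a2 x = liminf (\<lambda>n. ereal (Psi_n b1 b2 a1 a2 n x))"

definition sigma :: "real \<Rightarrow> real \<Rightarrow> real \<Rightarrow> real \<Rightarrow> ereal" where
  "sigma b1 b2 a1 a2 = (INF x\<in>{0..pbar a2}. Psi_liminf b1 b2 a1 a2 x)"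

end

theory Submission imports Defs begin

text \<open>
  On the axis \<open>p\<^sub>1 = 0\<close> the first coordinate is multiplied in each step by
  \<open>\<phi>\<^sub>1 \<psi>(\<beta>\<^sub>2 p\<^sub>2)\<close>, so \<open>\<phi>\<^sub>1 \<sigma> > 1\<close> forces the product of these multipliers along the
  axis orbit of every \<open>(0, x)\<close> with \<open>0 \<le> x \<le> pbar a2\<close> to exceed 2 after finitely many steps.
  These products depend continuously on the starting point, so by compactness of the segment
  there are \<open>e > 0\<close> and \<open>N\<close> such that every point with \<open>0 < p\<^sub>1 < e\<close> and \<open>p\<^sub>2 \<le> pbar a2\<close>
  (which holds along every orbit after one step) doubles its first coordinate within \<open>N\<close> steps.
  Doubling repeatedly, a first coordinate \<open>\<ge> c\<close> exceeds any fixed multiple \<open>A c < e\<close> within a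
  number of steps bounded in terms of \<open>A\<close> and \<open>N\<close> only.
\<close>

lemma psi_mult: "x * psi x = 1 - exp (- x)"
  by (simp add: psi_def)

lemma psi_pos: "x \<ge> 0 \<Longrightarrow> psi x > 0"
  unfolding psi_def by auto

lemma tendsto_psi_0: "(psi \<longlongrightarrow> 1) (at 0)"
proof -
  have "((\<lambda>x. 1 - exp (- x)) has_field_derivative 1) (at (0::real))"
    by (auto intro!: derivative_eq_intros)
  then have "((\<lambda>x. (1 - exp (- x)) / x) \<longlongrightarrow> (1::real)) (at 0)"
    unfolding has_field_derivative_iff by simp
  then show ?thesis
    by (rule Lim_transform_eventually) (auto simp: psi_def eventually_at_filter)
qed

lemma isCont_psi: "isCont psi x"
proof (cases "x = 0")
  case True
  then show ?thesis using tendsto_psi_0 by (simp add: isCont_def psi_def)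
next
  case False
  have "isCont (\<lambda>y. (1 - exp (- y)) / y) x" using False by (auto intro!: continuous_intros)
  moreover have "\<forall>\<^sub>F y in nhds x. (1 - exp (- y)) / y = psi y"
    using eventually_nhds_in_open[of "-{0}" x] False
    by (auto elim!: eventually_mono simp: psi_def)
  ultimately show ?thesis using isCont_cong by metis
qed

lemma continuous_on_psi [continuous_intros]:
  "continuous_on S f \<Longrightarrow> continuous_on S (\<lambda>x. psi (f x))"
  by (rule continuous_on_compose2[of UNIV psi]) (auto intro: continuous_at_imp_continuous_on isCont_psi)

lemma mult_psi_bounds:
  assumes "0 \<le> y" "y \<le> s"
  shows "0 \<le> y * psi s" "y * psi s < 1"
proof -
  have "psi s > 0" using assms psi_pos by simp
  then have "y * psi s \<le> s * psi s" using assms by (simp add: mult_right_mono)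
  also have "\<dots> < 1" by (simp add: psi_mult)
  finally show "y * psi s < 1" .
  show "0 \<le> y * psi s" using \<open>psi s > 0\<close> assms by simp
qed

lemma fmap_eq_psi:
  assumes "S2 b1 b2 p = 0 \<Longrightarrow> q = 0"
  shows "fmap b1 b2 b q p = b * q * psi (S2 b1 b2 p)"
  using assms by (auto simp: fmap_def psi_def)

text \<open>
  Rationalizing the numerator of \<open>g\<^sub>\<alpha>\<close> gives \<open>g\<^sub>\<alpha>(x) = x \<cdot> gfactor \<alpha> x\<close> on \<open>[0,1]\<close>, also for
  \<open>\<alpha> = 0\<close>; unlike \<open>g\<^sub>\<alpha>(x)/x\<close>, the factor is continuous and equals \<open>1 - \<alpha>\<close> at 0.
\<close>
definition gfactor :: "real \<Rightarrow> real \<Rightarrow> real" where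
  "gfactor a x = 8 * (1 - a) * (1 - x)^3 / (1 + sqrt (max 0 (1 - 4 * (1 - a) * x * (1 - x))))^3"

lemma continuous_on_gfactor [continuous_intros]:
  "continuous_on S f \<Longrightarrow> continuous_on S (\<lambda>x. gfactor a (f x))"
  unfolding gfactor_def by (intro continuous_intros) (auto simp: add_nonneg_eq_0_iff)

lemma gfactor_0: "gfactor a 0 = 1 - a"
  by (simp add: gfactor_def)

lemma gfactor_pos: "a < 1 \<Longrightarrow> x < 1 \<Longrightarrow> gfactor a x > 0"
  unfolding gfactor_def by (intro divide_pos_pos zero_less_power add_pos_nonneg) auto

lemma gfactor_le_8:
  assumes "0 \<le> a" "a < 1" "0 \<le> x" "x \<le> 1"
  shows "gfactor a x \<le> 8"
proof -
  have "1 \<le> (1 + sqrt (max 0 (1 - 4 * (1 - a) * x * (1 - x))))^3"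
    by (rule one_le_power) simp
  moreover have "0 \<le> 8 * (1 - a) * (1 - x)^3" using assms by simp
  ultimately have "gfactor a x \<le> 8 * (1 - a) * (1 - x)^3 / 1"
    unfolding gfactor_def by (intro divide_left_mono) (auto intro: add_pos_nonneg)
  also have "\<dots> = 8 * ((1 - a) * (1 - x)^3)" by simp
  also have "\<dots> \<le> 8"
    using assms mult_le_one[of "1 - a" "(1 - x)^3"] power_le_one[of "1 - x" 3] by simp
  finally show ?thesis .
qed

lemma gfun_eq_mult_gfactor:
  assumes "0 \<le> a" "a < 1" "0 \<le> x" "x \<le> 1"
  shows "gfun a x = x * gfactor a x"
proof -
  define u where "u = 4 * (1 - a) * x * (1 - x)"
  define s where "s = sqrt (1 - u)"
  have "4 * x * (1 - x) \<le> 1"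
    using zero_le_power2[of "2 * x - 1"] by (simp add: power2_eq_square algebra_simps)
  then have "(1 - a) * (4 * x * (1 - x)) \<le> 1"
    using assms by (smt (verit) mult_le_one mult_nonneg_nonneg)
  moreover have "u = (1 - a) * (4 * x * (1 - x))" by (simp add: u_def algebra_simps)
  ultimately have u: "0 \<le> u" "u \<le> 1" using assms by simp_all
  then have s: "0 \<le> s" "s\<^sup>2 = 1 - u" by (simp_all add: s_def)
  have G: "gfactor a x = 8 * (1 - a) * (1 - x)^3 / (1 + s)^3"
    using u by (simp add: gfactor_def s_def u_def)
  show ?thesis
  proof (cases "a = 0")
    case True
    have "1 - u = (1 - 2 * x)\<^sup>2" unfolding u_def True by (simp add: power2_eq_square algebra_simps)
    then have s_abs: "s = \<bar>1 - 2 * x\<bar>" unfolding s_def by simp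
    show ?thesis
    proof (cases "x \<le> 1/2")
      case x: True
      then have "1 + s = 2 * (1 - x)" using s_abs by simp
      then have "(1 + s)^3 = 8 * (1 - x)^3" by (simp only: power_mult_distrib) simp
      then show ?thesis using G x \<open>a = 0\<close> by (simp add: gfun_def)
    next
      case x: False
      then have "1 + s = 2 * x" using s_abs by simp
      then have "(1 + s)^3 = 8 * x^3" by (simp only: power_mult_distrib) simp
      then show ?thesis using G x \<open>a = 0\<close> by (simp add: gfun_def power2_eq_square power3_eq_cube)
    qed
  next
    case a0: False
    show ?thesis
    proof (cases "x = 0")
      case True
      then show ?thesis by (simp add: gfun_def)
    next
      case False
      have "(1 - s) * (1 + s) = u" using s by (simp add: power2_eq_square algebra_simps)
      then have "(1 - s)^3 = u^3 / (1 + s)^3"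
        using s by (simp add: eq_divide_eq power_mult_distrib[symmetric])
      moreover have "u^3 = (8 * (1 - a)^2 * x^2) * (x * (8 * (1 - a) * (1 - x)^3))"
        unfolding u_def by (simp add: algebra_simps power2_eq_square power3_eq_cube)
      ultimately show ?thesis
        using G a0 False assms by (simp add: gfun_def s_def u_def mult.assoc)
    qed
  qed
qed

lemma gfun_le_pbar:
  assumes "0 \<le> a" "a < 1" "0 \<le> x" "x \<le> 1"
  shows "gfun a x \<le> pbar a"
proof -
  have "gfun a y \<le> 8" if "y \<in> {0..1}" for y
  proof -
    have "0 \<le> gfactor a y" unfolding gfactor_def using that assms by simp
    then show ?thesis
      using that gfun_eq_mult_gfactor[OF assms(1,2), of y] gfactor_le_8[OF assms(1,2), of y]
        mult_mono[of y 1 "gfactor a y" 8]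
      by simp
  qed
  then have "bdd_above (gfun a ` {0..1})" by (intro bdd_aboveI2)
  then show ?thesis unfolding pbar_def using assms by (intro cSUP_upper) auto
qed

lemma ereal_mult_gt_1_real_below:
  fixes s :: ereal
  assumes phi: "0 < phi" and gt: "1 < ereal phi * s"
  obtains rho where "0 < rho" "1 < phi * rho" "ereal rho < s"
proof -
  have "ereal (1 / phi) < s"
  proof (rule ccontr)
    assume "\<not> ?thesis"
    then have "ereal phi * s \<le> ereal phi * ereal (1 / phi)"
      using phi by (intro ereal_mult_left_mono) auto
    then have "ereal phi * s \<le> 1" using phi by (simp add: one_ereal_def)
    then show False using gt leD by blast
  qed
  then obtain rho where rho: "1 / phi < rho" "ereal rho < s"
    using ereal_dense2 by (metis less_ereal.simps(1))
  have "0 < rho" using rho(1) phi by (meson divide_pos_pos order.strict_trans zero_less_one)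
  moreover have "1 < phi * rho" using rho(1) phi by (simp add: divide_less_eq mult.commute)
  ultimately show ?thesis using rho(2) that by blast
qed

locale two_type =
  fixes b1 b2 a1 a2 :: real
  assumes b1_pos: "0 < b1" and b2_pos: "0 < b2"
    and a1: "0 \<le> a1" "a1 < 1" and a2: "0 \<le> a2" "a2 < 1"
begin

definition quadrant :: "(real \<times> real) set" where
  "quadrant = {p. 0 \<le> fst p \<and> 0 \<le> snd p}"

text \<open>
  \<open>rate1\<close>, \<open>rate2\<close> are continuous on \<open>\<real>\<^sup>2\<close> and equal \<open>\<lambda>\<^sub>1\<close>, \<open>\<lambda>\<^sub>2\<close> on the quadrant wherever
  these are defined, so \<open>hext\<close> is a continuous extension of \<open>h\<close> that exhibits the multipliers.
\<close>
definition rate1 :: "real \<times> real \<Rightarrow> real" where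
  "rate1 p = b1 * psi (S2 b1 b2 p) * gfactor a1 (b1 * fst p * psi (S2 b1 b2 p))"

definition rate2 :: "real \<times> real \<Rightarrow> real" where
  "rate2 p = b2 * psi (S2 b1 b2 p) * gfactor a2 (b2 * snd p * psi (S2 b1 b2 p))"

definition hext :: "real \<times> real \<Rightarrow> real \<times> real" where
  "hext p = (fst p * rate1 p, snd p * rate2 p)"

definition growth1 :: "nat \<Rightarrow> real \<times> real \<Rightarrow> real" where
  "growth1 n p = (\<Prod>k<n. rate1 ((hext ^^ k) p))"

lemma quadrant_coord_bounds:
  assumes "p \<in> quadrant"
  shows "0 \<le> b1 * fst p" "b1 * fst p \<le> S2 b1 b2 p" "0 \<le> b2 * snd p" "b2 * snd p \<le> S2 b1 b2 p"
  using assms b1_pos b2_pos by (auto simp: quadrant_def S2_def)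

lemma fmap_quadrant:
  assumes "p \<in> quadrant"
  shows "fmap b1 b2 b1 (fst p) p = b1 * fst p * psi (S2 b1 b2 p)"
    "fmap b1 b2 b2 (snd p) p = b2 * snd p * psi (S2 b1 b2 p)"
  using quadrant_coord_bounds[OF assms] b1_pos b2_pos
  by (auto intro!: fmap_eq_psi simp: mult_le_0_iff zero_le_mult_iff)

lemma hmap_eq_hext:
  assumes p: "p \<in> quadrant"
  shows "hmap b1 b2 a1 a2 p = hext p"
  using mult_psi_bounds[OF quadrant_coord_bounds(1,2)[OF p]]
    mult_psi_bounds[OF quadrant_coord_bounds(3,4)[OF p]] a1 a2
  by (simp add: hmap_def hext_def rate1_def rate2_def fmap_quadrant[OF p] gfun_eq_mult_gfactor)

lemma snd_hmap_le_pbar: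
  assumes p: "p \<in> quadrant"
  shows "snd (hmap b1 b2 a1 a2 p) \<le> pbar a2"
  using mult_psi_bounds[OF quadrant_coord_bounds(3,4)[OF p]] a2
  by (simp add: hmap_def fmap_quadrant[OF p] gfun_le_pbar)

lemma rate_pos:
  assumes p: "p \<in> quadrant"
  shows "0 < rate1 p" "0 < rate2 p"
  using mult_psi_bounds[OF quadrant_coord_bounds(1,2)[OF p]]
    mult_psi_bounds[OF quadrant_coord_bounds(3,4)[OF p]]
    psi_pos[OF order.trans[OF quadrant_coord_bounds(1,2)[OF p]]] a1 a2 b1_pos b2_pos
  by (auto simp: rate1_def rate2_def intro!: mult_pos_pos gfactor_pos)

lemma hext_quadrant: "p \<in> quadrant \<Longrightarrow> hext p \<in> quadrant"
  using rate_pos[of p] by (simp add: hext_def quadrant_def)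

lemma hmap_iter_eq_hext_iter:
  "p \<in> quadrant \<Longrightarrow> (hext ^^ n) p \<in> quadrant \<and> (hmap b1 b2 a1 a2 ^^ n) p = (hext ^^ n) p"
  by (induction n) (auto simp: hext_quadrant hmap_eq_hext)

lemma continuous_on_hext_iter: "continuous_on UNIV (hext ^^ n)"
proof (induction n)
  case (Suc n)
  have "continuous_on UNIV hext"
    unfolding hext_def rate1_def rate2_def S2_def by (intro continuous_intros)
  with Suc show ?case
    by (auto intro: continuous_on_compose2[of UNIV hext UNIV])
qed (simp add: continuous_on_id)

lemma continuous_on_growth1: "continuous_on UNIV (growth1 n)"
  unfolding growth1_def[abs_def] rate1_def S2_def
  by (intro continuous_on_prod continuous_intros continuous_on_compose2[OF continuous_on_hext_iter]) auto

lemma fst_hext_iter: "fst ((hext ^^ n) p) = fst p * growth1 n p"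
proof (induction n)
  case (Suc n)
  have "fst (hext q) = fst q * rate1 q" for q by (simp add: hext_def)
  with Suc show ?case by (simp add: growth1_def)
qed (simp add: growth1_def)

lemma growth1_pos: "p \<in> quadrant \<Longrightarrow> 0 < growth1 n p"
  unfolding growth1_def by (auto intro!: prod_pos rate_pos dest: hmap_iter_eq_hext_iter)

lemma growth1_axis:
  assumes "0 \<le> x"
  shows "growth1 n (0, x) =
    ((1 - a1) * b1)^n * (\<Prod>k<n. psi (b2 * snd ((hmap b1 b2 a1 a2 ^^ k) (0, x))))"
proof -
  have x: "(0, x) \<in> quadrant" using assms by (simp add: quadrant_def)
  have "(hext ^^ k) (0, x) = (0, snd ((hmap b1 b2 a1 a2 ^^ k) (0, x)))" for k
    using fst_hext_iter[of k "(0, x)"] hmap_iter_eq_hext_iter[OF x, of k] by (simp add: prod_eq_iff)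
  then show ?thesis
    by (simp add: growth1_def rate1_def S2_def gfactor_0 prod.distrib power_mult_distrib)
qed

lemma growth1_axis_gt_2:
  assumes rho: "1 < (1 - a1) * b1 * rho" "0 < rho"
    and x: "0 \<le> x" and less: "ereal rho < Psi_liminf b1 b2 a1 a2 x"
  obtains n where "1 \<le> n" "2 < growth1 n (0, x)"
proof -
  define phi where "phi = (1 - a1) * b1"
  have phi: "0 < phi" using a1 b1_pos by (simp add: phi_def)
  obtain n0 where n0: "2 < (phi * rho)^n0" using real_arch_pow rho by (auto simp: phi_def)
  have "\<forall>\<^sub>F n in sequentially. rho < Psi_n b1 b2 a1 a2 n x"
    using less_LiminfD[OF less[unfolded Psi_liminf_def]] by simp
  moreover have "\<forall>\<^sub>F n in sequentially. Suc n0 \<le> n" by (rule eventually_ge_at_top)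
  ultimately obtain n where n: "rho < Psi_n b1 b2 a1 a2 n x" "Suc n0 \<le> n"
    using eventually_happens'[OF sequentially_bot eventually_conj] by blast
  define P where "P = (\<Prod>k<n. psi (b2 * snd ((hmap b1 b2 a1 a2 ^^ k) (0, x))))"
  have "0 < P"
    unfolding P_def using hmap_iter_eq_hext_iter[of "(0, x)"] x b2_pos
    by (intro prod_pos ballI psi_pos) (auto simp: quadrant_def)
  have "rho ^ n < (P powr (1 / real n)) ^ n"
    using n rho(2) by (intro power_strict_mono) (auto simp: Psi_n_def P_def)
  also have "\<dots> = P"
    using \<open>0 < P\<close> n(2) by (simp add: powr_realpow[symmetric] powr_powr)
  finally have "phi ^ n * rho ^ n < growth1 n (0, x)"
    using phi by (simp add: growth1_axis[OF x] P_def phi_def)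
  moreover have "(phi * rho)^n0 \<le> (phi * rho)^n"
    using n(2) rho by (intro power_increasing) (auto simp: phi_def)
  ultimately show ?thesis
    using n(2) n0 by (intro that[of n]) (auto simp: power_mult_distrib)
qed

lemma doubling_near_axis:
  assumes "1 < ereal ((1 - a1) * b1) * sigma b1 b2 a1 a2"
  obtains e N where "0 < e"
    "\<And>p. p \<in> quadrant \<Longrightarrow> 0 < fst p \<Longrightarrow> fst p < e \<Longrightarrow> snd p \<le> pbar a2 \<Longrightarrow>
       \<exists>m. 1 \<le> m \<and> m \<le> N \<and> 2 * fst p < fst ((hext ^^ m) p)"
proof -
  obtain rho where rho: "0 < rho" "1 < (1 - a1) * b1 * rho" "ereal rho < sigma b1 b2 a1 a2"
    using ereal_mult_gt_1_real_below[OF _ assms] a1 b1_pos by auto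
  define U where "U n = {p. 2 < growth1 n p}" for n
  define C where "C = (\<lambda>x. (0::real, x)) ` {0..pbar a2}"
  have open_U: "open (U n)" for n
    unfolding U_def by (intro open_Collect_less continuous_on_const continuous_on_growth1)
  have "compact C"
    unfolding C_def by (intro compact_continuous_image continuous_intros compact_Icc)
  have "C \<subseteq> (\<Union>n\<in>{1..}. U n)"
  proof
    fix y assume "y \<in> C"
    then obtain x where x: "0 \<le> x" "x \<le> pbar a2" "y = (0, x)" unfolding C_def by auto
    have "sigma b1 b2 a1 a2 \<le> Psi_liminf b1 b2 a1 a2 x"
      unfolding sigma_def using x by (intro INF_lower) auto
    then have "ereal rho < Psi_liminf b1 b2 a1 a2 x" using rho(3) by order
    then obtain n where "1 \<le> n" "2 < growth1 n (0, x)"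
      by (rule growth1_axis_gt_2[OF rho(2,1) x(1)])
    then show "y \<in> (\<Union>n\<in>{1..}. U n)" using x by (auto simp: U_def)
  qed
  then obtain M where M: "M \<subseteq> {1..}" "finite M" "C \<subseteq> (\<Union>n\<in>M. U n)"
    by (rule compactE_image[OF \<open>compact C\<close> open_U])
  then obtain e where "0 < e" and e: "\<And>y. y \<in> C \<Longrightarrow> \<exists>G \<in> U ` M. ball y e \<subseteq> G"
    using Heine_Borel_lemma[OF \<open>compact C\<close>, of "U ` M"] open_U by blast
  show ?thesis
  proof (rule that[OF \<open>0 < e\<close>, of "Max M"])
    fix p assume p: "p \<in> quadrant" "0 < fst p" "fst p < e" "snd p \<le> pbar a2"
    then have "(0, snd p) \<in> C" by (simp add: C_def quadrant_def)
    then obtain n where n: "n \<in> M" "ball (0, snd p) e \<subseteq> U n" using e by blast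
    have "p \<in> ball (0, snd p) e" using p by (cases p) (simp add: dist_Pair_Pair)
    then have "2 < growth1 n p" using n(2) by (auto simp: U_def)
    then have "2 * fst p < fst ((hext ^^ n) p)"
      using p by (simp add: fst_hext_iter mult.commute)
    moreover have "1 \<le> n" "n \<le> Max M" using n M by auto
    ultimately show "\<exists>m. 1 \<le> m \<and> m \<le> Max M \<and> 2 * fst p < fst ((hext ^^ m) p)" by blast
  qed
qed

lemma fst_hmap_iter_pos:
  assumes "p \<in> quadrant" "0 < fst p"
  shows "0 < fst ((hmap b1 b2 a1 a2 ^^ n) p)"
  using assms hmap_iter_eq_hext_iter[OF assms(1)] growth1_pos[OF assms(1)]
  by (simp add: fst_hext_iter)

lemma orbit_doubling:
  assumes "1 < ereal ((1 - a1) * b1) * sigma b1 b2 a1 a2" and p: "p \<in> quadrant"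
  obtains e N where "0 < e"
    "\<And>n. 1 \<le> n \<Longrightarrow> 0 < fst ((hmap b1 b2 a1 a2 ^^ n) p) \<Longrightarrow> fst ((hmap b1 b2 a1 a2 ^^ n) p) < e \<Longrightarrow>
       \<exists>m. 1 \<le> m \<and> m \<le> N \<and> 2 * fst ((hmap b1 b2 a1 a2 ^^ n) p) < fst ((hmap b1 b2 a1 a2 ^^ (n + m)) p)"
proof -
  obtain e N where "0 < e" and near_axis:
    "\<And>q. q \<in> quadrant \<Longrightarrow> 0 < fst q \<Longrightarrow> fst q < e \<Longrightarrow> snd q \<le> pbar a2 \<Longrightarrow>
       \<exists>m. 1 \<le> m \<and> m \<le> N \<and> 2 * fst q < fst ((hext ^^ m) q)"
    using doubling_near_axis[OF assms(1)] by blast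
  note orbit = hmap_iter_eq_hext_iter[OF p]
  show ?thesis
  proof (rule that[OF \<open>0 < e\<close>])
    fix n :: nat assume n: "1 \<le> n" and small: "0 < fst ((hmap b1 b2 a1 a2 ^^ n) p)"
      "fst ((hmap b1 b2 a1 a2 ^^ n) p) < e"
    obtain n' where n': "n = Suc n'" using n by (cases n) auto
    have "snd ((hmap b1 b2 a1 a2 ^^ n) p) \<le> pbar a2"
      using snd_hmap_le_pbar[of "(hmap b1 b2 a1 a2 ^^ n') p"] orbit[of n'] by (simp add: n')
    then obtain m where "1 \<le> m" "m \<le> N" "2 * fst ((hext ^^ n) p) < fst ((hext ^^ m) ((hext ^^ n) p))"
      using near_axis[of "(hext ^^ n) p"] small orbit[of n] by auto
    moreover have "(hext ^^ m) ((hext ^^ n) p) = (hmap b1 b2 a1 a2 ^^ (n + m)) p"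
      using orbit[of "n + m"] by (simp add: funpow_add add.commute)
    ultimately show "\<exists>m. 1 \<le> m \<and> m \<le> N \<and>
        2 * fst ((hmap b1 b2 a1 a2 ^^ n) p) < fst ((hmap b1 b2 a1 a2 ^^ (n + m)) p)"
      using orbit[of n] by auto
  qed
qed

end

lemma doubling_iterate:
  fixes x :: "nat \<Rightarrow> real"
  assumes doubling: "\<And>n. start \<le> n \<Longrightarrow> x n < e \<Longrightarrow> \<exists>m. 1 \<le> m \<and> m \<le> N \<and> 2 * x n < x (n + m)"
    and "start \<le> n" "c \<le> x n" "B < e"
  shows "\<exists>k \<le> j * N. B < x (n + k) \<or> 2^j * c \<le> x (n + k)"
proof (induction j)
  case 0
  show ?case using assms by (intro exI[of _ 0]) auto
next
  case (Suc j)
  then obtain k where k: "k \<le> j * N" "B < x (n + k) \<or> 2^j * c \<le> x (n + k)" by blast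
  show ?case
  proof (cases "B < x (n + k)")
    case True
    then show ?thesis using k(1) by (intro exI[of _ k]) auto
  next
    case False
    then have "x (n + k) < e" using assms(4) by linarith
    then obtain m where "1 \<le> m" "m \<le> N" "2 * x (n + k) < x (n + k + m)"
      using doubling[of "n + k"] assms(2) by auto
    then show ?thesis
      using k False by (intro exI[of _ "k + m"]) (auto simp: add.assoc)
  qed
qed

lemma doubling_sequence_exceeds_multiple:
  fixes x :: "nat \<Rightarrow> real" and A :: real
  assumes pos: "\<And>n. 0 < x n" and "0 < e"
    and doubling: "\<And>n. 1 \<le> n \<Longrightarrow> x n < e \<Longrightarrow> \<exists>m. 1 \<le> m \<and> m \<le> N \<and> 2 * x n < x (n + m)"
  shows "\<exists>cbar. 0 < cbar \<and> cbar < x 0 \<and>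
    (\<forall>c. 0 < c \<and> c \<le> cbar \<longrightarrow> (\<exists>kbar. \<forall>n. c \<le> x n \<longrightarrow> (\<exists>k\<le>kbar. A * c < x (n + k))))"
proof -
  define A' where "A' = max A 1"
  define cbar where "cbar = min (x 0 / 2) (min e (x 1) / (2 * A'))"
  obtain J where J: "A' < 2^J" using real_arch_pow[of 2 A'] by auto
  have "0 < cbar" "cbar < x 0" using pos[of 0] pos[of 1] \<open>0 < e\<close> by (auto simp: cbar_def A'_def)
  moreover have "\<exists>kbar. \<forall>n. c \<le> x n \<longrightarrow> (\<exists>k\<le>kbar. A * c < x (n + k))" if c: "0 < c" "c \<le> cbar" for c
  proof -
    have "A' * c \<le> A' * cbar" using c by (intro mult_left_mono) (auto simp: A'_def)
    also have "\<dots> < min e (x 1)"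
      using pos[of 1] \<open>0 < e\<close> by (simp add: cbar_def A'_def min_def field_simps)
    finally have A'c: "A' * c < e" "A' * c < x 1" by simp_all
    have Ac: "A * c \<le> A' * c" "A' * c < 2^J * c" using c J by (simp_all add: A'_def)
    have "\<exists>k\<le>J * N + 1. A * c < x (n + k)" if cn: "c \<le> x n" for n
    proof (cases "n = 0")
      case True
      then show ?thesis using A'c Ac by (intro exI[of _ 1]) auto
    next
      case False
      have "1 \<le> n" "A * c < e" using False A'c Ac by auto
      then obtain k where "k \<le> J * N" "A * c < x (n + k) \<or> 2^J * c \<le> x (n + k)"
        using doubling_iterate[where x = x and e = e and N = N and start = 1 and j = J,
            OF doubling _ cn] by blast
      then show ?thesis using Ac by (intro exI[of _ k]) auto
    qed
    then show ?thesis by blast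
  qed
  ultimately show ?thesis by blast
qed


theorem mainTheorem19:
  fixes b1 b2 a1 a2 :: real and p0 :: "real \<times> real"
  assumes "b1 > 0" and "b2 > 0"
    and "0 \<le> a1" and "a1 < 1" and "0 \<le> a2" and "a2 < 1"
    and "ereal ((1 - a1) * b1) * sigma b1 b2 a1 a2 > 1"
    and "0 < fst p0" and "fst p0 < 1" and "0 < snd p0" and "snd p0 < 1"
    and "fst p0 + snd p0 \<le> 1"
  shows "\<exists>cbar. 0 < cbar \<and> cbar < fst p0 \<and>
    (\<forall>c. 0 < c \<and> c \<le> cbar \<longrightarrow>
      (\<exists>kbar::nat. \<forall>n::nat. fst ((hmap b1 b2 a1 a2 ^^ n) p0) \<ge> c \<longrightarrow>
         (\<exists>k\<le>kbar. fst ((hmap b1 b2 a1 a2 ^^ (n + k)) p0) >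
            3 / (2 * Inf {lam1 b1 b2 a1 a2 p | p. p \<in> {0<..pbar a1} \<times> {0..pbar a2}}) * c)))"
proof -
  interpret two_type b1 b2 a1 a2
    using assms by unfold_locales auto
  have p0: "p0 \<in> quadrant" using assms by (simp add: quadrant_def)
  obtain e N where "0 < e" and doubling:
    "\<And>n. 1 \<le> n \<Longrightarrow> 0 < fst ((hmap b1 b2 a1 a2 ^^ n) p0) \<Longrightarrow> fst ((hmap b1 b2 a1 a2 ^^ n) p0) < e \<Longrightarrow>
       \<exists>m. 1 \<le> m \<and> m \<le> N \<and> 2 * fst ((hmap b1 b2 a1 a2 ^^ n) p0) < fst ((hmap b1 b2 a1 a2 ^^ (n + m)) p0)"
    using orbit_doubling[OF assms(7) p0] by blast
  have pos: "0 < fst ((hmap b1 b2 a1 a2 ^^ n) p0)" for n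
    using fst_hmap_iter_pos[OF p0 assms(8)] .
  show ?thesis
    by (rule doubling_sequence_exceeds_multiple[OF pos \<open>0 < e\<close> doubling[OF _ pos], simplified])
qed

end
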